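(* Let $(F_n)$ be the Fibonacci sequence with $F_0=0$, $F_1=1$, $F_n=F_{n-1}+F_{n-2}$, extended by $F_{-1}=1$. For every integer $m\ge 0$, $$[\underbrace{11,11,\dots,11}_{m},\,3]=\frac{F_{5m+4}}{F_{5m-1}},$$ where the continued fraction has $m+1$ entries $a_0,\dots,a_m$ with $a_i=11$ for $0\le i<m$ and $a_m=3$.
   Context: For numbers $a_0,a_1,\dots,a_m$, the finite simple continued fraction $[a_0,a_1,\dots,a_m]$ denotes $a_0+\cfrac{1}{a_1+\cfrac{1}{\ddots+\cfrac{1}{a_m}}}$, evaluated as a rational number; $[a_0]=a_0$. *)

theory Defs
  imports Complex_Main "HOL-Number_Theory.Fib"
begin

fun cf :: "rat list \<Rightarrow> rat" where
  "cf [] = 0"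
| "cf [a] = a"
| "cf (a # b # rest) = a + 1 / cf (b # rest)"

definition F :: "int \<Rightarrow> nat" where
  "F k = (if k = -1 then 1 else fib (nat k))"

end

theory Submission
  imports Defs
begin

text \<open>The continued fraction with all partial quotients equal to \<open>a\<close> except the last is a
  quotient \<open>u (m + 1) / u m\<close> of consecutive terms of any nonvanishing solution of
  \<open>u (k + 2) = a u (k + 1) + u k\<close> that starts from \<open>u 1 / u 0 = b\<close>.  Since \<open>11 = F\<^sub>1\<^sub>0 / F\<^sub>5\<close>
  is the Lucas number \<open>L\<^sub>5\<close>, the Fibonacci numbers satisfy \<open>F\<^sub>n\<^sub>+\<^sub>1\<^sub>0 = 11 F\<^sub>n\<^sub>+\<^sub>5 + F\<^sub>n\<close>, so
  \<open>u k = F\<^sub>5\<^sub>k\<^sub>-\<^sub>1\<close> is such a solution for \<open>a = 11\<close>, \<open>b = F\<^sub>4 / F\<^sub>-\<^sub>1 = 3\<close>.\<close>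

lemma cf_Cons_snoc: "cf (a # xs @ [b]) = a + 1 / cf (xs @ [b])"
  by (cases xs) auto

lemma cf_replicate_snoc_eq_ratio:
  fixes u :: "nat \<Rightarrow> rat"
  assumes rec: "\<And>k. u (k + 2) = a * u (k + 1) + u k"
    and nonzero: "\<And>k. u k \<noteq> 0"
    and start: "u 1 = b * u 0"
  shows "cf (replicate m a @ [b]) = u (m + 1) / u m"
proof (induction m)
  case 0
  show ?case using start nonzero[of 0] by simp
next
  case (Suc m)
  have "cf (replicate (Suc m) a @ [b]) = a + 1 / cf (replicate m a @ [b])"
    using cf_Cons_snoc by simp
  also have "\<dots> = a + u m / u (m + 1)"
    using Suc.IH by simp
  also have "\<dots> = (a * u (m + 1) + u m) / u (m + 1)"
    using nonzero[of "m + 1"] by (simp add: field_simps)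
  also have "\<dots> = u (Suc m + 1) / u (Suc m)"
    using rec[of m] by (simp add: add.commute)
  finally show ?case .
qed

lemma fib_add_10: "fib (n + 10) = 11 * fib (n + 5) + fib n"
  by (simp add: numeral_eq_Suc)

lemma F_add_10:
  assumes "n \<ge> -1"
  shows "F (n + 10) = 11 * F (n + 5) + F n"
proof (cases "n = -1")
  case True
  then show ?thesis by (simp add: F_def numeral_eq_Suc)
next
  case False
  with assms have "nat (n + 10) = nat n + 10" "nat (n + 5) = nat n + 5"
    by auto
  with False assms show ?thesis
    using fib_add_10[of "nat n"] by (simp add: F_def)
qed

lemma F_pos: "n \<ge> -1 \<Longrightarrow> n \<noteq> 0 \<Longrightarrow> F n > 0"
  by (simp add: F_def fib_neq_0_nat)

theorem theorem4:
  fixes m :: nat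
  shows "cf (replicate m 11 @ [3]) = of_nat (F (5 * int m + 4)) / of_nat (F (5 * int m - 1))"
proof -
  define u :: "nat \<Rightarrow> rat" where "u k = of_nat (F (5 * int k - 1))" for k
  have "u (k + 2) = 11 * u (k + 1) + u k" for k
    using F_add_10[of "5 * int k - 1"] by (simp add: u_def algebra_simps)
  moreover have "u k \<noteq> 0" for k
  proof -
    have "5 * int k - 1 \<noteq> 0" by presburger
    then show ?thesis using F_pos[of "5 * int k - 1"] by (simp add: u_def)
  qed
  moreover have "u 1 = 3 * u 0"
    by (simp add: u_def F_def numeral_eq_Suc)
  ultimately have "cf (replicate m 11 @ [3]) = u (m + 1) / u m"
    by (rule cf_replicate_snoc_eq_ratio)
  then show ?thesis
    by (simp add: u_def algebra_simps)
qed

end
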